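(* Let $V$ be a real vector space of dimension $n$ and $2\le k\le n-1$. A standard isotropic subspace $L\subseteq V\oplus\wedge^kV^*$ satisfies (C2s) if and only if either $L=\{X+i_X\omega\mid X\in V\}$ is the graph of a decomposable $(k+1)$-form $\omega\in\wedge^{k+1}V^*$, or $L=E+\mathrm{Ann}(E)$ for a subspace $E\subseteq V$ with $\dim E\le n-k$.
   Context: On $V\oplus\wedge^kV^*$ the pairing is $\langle X+\alpha,Y+\beta\rangle=i_X\beta+i_Y\alpha\in\wedge^{k-1}V^*$, with orthogonal $L^\perp$; $L$ is isotropic if $L\subseteq L^\perp$. $\mathrm{pr}_1,\mathrm{pr}_2$ are the projections onto $V$, $\wedge^kV^*$. For $W\subseteq V$, $\mathrm{Ann}(W)=\{\alpha\in\wedge^kV^*\mid i_Y\alpha=0\ \forall Y\in W\}$; for $S\subseteq\wedge^kV^*$, $S^\circ=\{X\in V\mid i_X\eta=0\ \forall\eta\in S\}$. An isotropic $L$ is standard if $\mathrm{Ann}(E)^\circ=E$ for $E=\mathrm{pr}_1(L)$ (equivalently $\dim E=n$ or $\dim E\le n-k$). Condition (C2s): $L\subseteq L^\perp$ and $\mathrm{Ann}(L\cap V)=\mathrm{pr}_2(L)$. *)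

theory Defs
  imports "HOL-Analysis.Analysis" "HOL-Combinatorics.Permutations"
begin

text \<open>Alternating k-forms on a finite-dimensional real vector space 'v, represented as
functions of a sequence of vectors that depend only on the first k entries, are linear
in each of those entries, and vanish when two of those entries coincide.\<close>

definition kforms :: "nat \<Rightarrow> ((nat \<Rightarrow> 'v::euclidean_space) \<Rightarrow> real) set" where
  "kforms k = {\<alpha>.
     (\<forall>v w. (\<forall>i<k. v i = w i) \<longrightarrow> \<alpha> v = \<alpha> w) \<and>
     (\<forall>i<k. \<forall>v. linear (\<lambda>x. \<alpha> (v(i := x)))) \<and>
     (\<forall>v i j. i < k \<and> j < k \<and> i \<noteq> j \<and> v i = v j \<longrightarrow> \<alpha> v = 0)}"

definition contr :: "'v \<Rightarrow> ((nat \<Rightarrow> 'v) \<Rightarrow> real) \<Rightarrow> ((nat \<Rightarrow> 'v) \<Rightarrow> real)" where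
  "contr X \<alpha> = (\<lambda>v. \<alpha> (case_nat X v))"

definition wedge1 :: "nat \<Rightarrow> (nat \<Rightarrow> 'v \<Rightarrow> real) \<Rightarrow> ((nat \<Rightarrow> 'v) \<Rightarrow> real)" where
  "wedge1 m \<theta> = (\<lambda>v. \<Sum>p | p permutes {..<m}. of_int (sign p) * (\<Prod>i<m. \<theta> i (v (p i))))"

definition decomposable :: "nat \<Rightarrow> ((nat \<Rightarrow> 'v::euclidean_space) \<Rightarrow> real) \<Rightarrow> bool" where
  "decomposable m \<omega> \<longleftrightarrow> (\<exists>\<theta>. (\<forall>i<m. linear (\<theta> i)) \<and> \<omega> = wedge1 m \<theta>)"

definition is_subspace :: "nat \<Rightarrow> ('v::euclidean_space \<times> ((nat \<Rightarrow> 'v) \<Rightarrow> real)) set \<Rightarrow> bool" where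
  "is_subspace k L \<longleftrightarrow> L \<subseteq> UNIV \<times> kforms k \<and> (0, \<lambda>v. 0) \<in> L \<and>
     (\<forall>X \<alpha> Y \<beta>. (X, \<alpha>) \<in> L \<and> (Y, \<beta>) \<in> L \<longrightarrow> (X + Y, \<lambda>v. \<alpha> v + \<beta> v) \<in> L) \<and>
     (\<forall>c X \<alpha>. (X, \<alpha>) \<in> L \<longrightarrow> (c *\<^sub>R X, \<lambda>v. c * \<alpha> v) \<in> L)"

definition pairing :: "('v \<times> ((nat \<Rightarrow> 'v) \<Rightarrow> real)) \<Rightarrow> ('v \<times> ((nat \<Rightarrow> 'v) \<Rightarrow> real)) \<Rightarrow> ((nat \<Rightarrow> 'v) \<Rightarrow> real)" where
  "pairing a b = (\<lambda>v. contr (fst a) (snd b) v + contr (fst b) (snd a) v)"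

definition orth :: "nat \<Rightarrow> ('v::euclidean_space \<times> ((nat \<Rightarrow> 'v) \<Rightarrow> real)) set \<Rightarrow> ('v \<times> ((nat \<Rightarrow> 'v) \<Rightarrow> real)) set" where
  "orth k L = {b \<in> UNIV \<times> kforms k. \<forall>a\<in>L. pairing a b = (\<lambda>v. 0)}"

definition isotropic :: "nat \<Rightarrow> ('v::euclidean_space \<times> ((nat \<Rightarrow> 'v) \<Rightarrow> real)) set \<Rightarrow> bool" where
  "isotropic k L \<longleftrightarrow> L \<subseteq> orth k L"

definition Ann :: "nat \<Rightarrow> 'v::euclidean_space set \<Rightarrow> ((nat \<Rightarrow> 'v) \<Rightarrow> real) set" where
  "Ann k W = {\<alpha> \<in> kforms k. \<forall>Y\<in>W. contr Y \<alpha> = (\<lambda>v. 0)}"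

definition annV :: "((nat \<Rightarrow> 'v) \<Rightarrow> real) set \<Rightarrow> 'v set" where
  "annV S = {X. \<forall>\<eta>\<in>S. contr X \<eta> = (\<lambda>v. 0)}"

definition capV :: "('v \<times> ((nat \<Rightarrow> 'v) \<Rightarrow> real)) set \<Rightarrow> 'v set" where
  "capV L = {X. (X, (\<lambda>v. 0)) \<in> L}"

definition standard :: "nat \<Rightarrow> ('v::euclidean_space \<times> ((nat \<Rightarrow> 'v) \<Rightarrow> real)) set \<Rightarrow> bool" where
  "standard k L \<longleftrightarrow> isotropic k L \<and> annV (Ann k (fst ` L)) = fst ` L"

definition C2s :: "nat \<Rightarrow> ('v::euclidean_space \<times> ((nat \<Rightarrow> 'v) \<Rightarrow> real)) set \<Rightarrow> bool" where
  "C2s k L \<longleftrightarrow> isotropic k L \<and> Ann k (capV L) = snd ` L"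

end

theory Submission
  imports Defs
begin

text \<open>
If \<open>pr\<^sub>1 L = V\<close>, isotropy forces \<open>L\<close> to be the graph of \<open>X \<mapsto> i\<^sub>X \<omega>\<close> for a \<open>(k+1)\<close>-form \<open>\<omega>\<close>,
and (C2s) says that every \<open>k\<close>-form annihilating \<open>ker \<omega>\<close> is a contraction of \<open>\<omega>\<close>. Let \<open>m\<close> be
the codimension of \<open>ker \<omega>\<close>, so that \<open>\<omega>\<close> lives on an \<open>m\<close>-dimensional complement: for \<open>m \<le> k\<close>
it vanishes; for \<open>m = k + 1\<close> it is a multiple of a volume form, hence decomposable, and every
\<open>k\<close>-form on the complement is a contraction of it; for \<open>m \<ge> k + 2\<close> it is not decomposable,
and \<open>Ann(ker \<omega>)\<close>, of dimension \<open>m choose k > m\<close>, is too big to be the image of the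
\<open>m\<close>-dimensional complement.

If \<open>E = pr\<^sub>1 L \<noteq> V\<close>, standardness forces \<open>dim E \<le> n - k\<close>. Then (C2s) forces \<open>L \<inter> V = E\<close>:
for \<open>X\<^sub>0 + \<alpha>\<^sub>0 \<in> L\<close> with \<open>X\<^sub>0 \<notin> L \<inter> V\<close>, isotropy demands for each \<open>\<beta> \<in> Ann(L \<inter> V)\<close> a partner
\<open>Y \<in> E\<close> with \<open>i\<^sub>X\<^sub>0 \<beta> + i\<^sub>Y \<alpha>\<^sub>0 = 0\<close>, and there are \<open>dim (E/(L \<inter> V)) + 1\<close> such \<open>\<beta>\<close> whose partners
would have to be independent modulo \<open>L \<inter> V\<close>. Once \<open>L \<inter> V = E\<close>, (C2s) gives \<open>L = E + Ann(E)\<close>.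
\<close>

definition form_kernel :: "((nat \<Rightarrow> 'v) \<Rightarrow> real) \<Rightarrow> 'v set" where
  "form_kernel \<omega> = {X. contr X \<omega> = (\<lambda>v. 0)}"

definition form_graph :: "((nat \<Rightarrow> 'v) \<Rightarrow> real) \<Rightarrow> ('v \<times> ((nat \<Rightarrow> 'v) \<Rightarrow> real)) set" where
  "form_graph \<omega> = {(X, contr X \<omega>) | X. True}"

section \<open>Alternating forms\<close>

lemma kforms_cong: "\<alpha> \<in> kforms k \<Longrightarrow> (\<And>i. i < k \<Longrightarrow> v i = w i) \<Longrightarrow> \<alpha> v = \<alpha> w"
  unfolding kforms_def by blast

lemma kforms_linear: "\<alpha> \<in> kforms k \<Longrightarrow> i < k \<Longrightarrow> linear (\<lambda>x. \<alpha> (v(i := x)))"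
  unfolding kforms_def by blast

lemma kforms_eq_0_repeated:
  "\<alpha> \<in> kforms k \<Longrightarrow> i < k \<Longrightarrow> j < k \<Longrightarrow> i \<noteq> j \<Longrightarrow> v i = v j \<Longrightarrow> \<alpha> v = 0"
  unfolding kforms_def by blast

lemma kforms_add: "\<alpha> \<in> kforms k \<Longrightarrow> i < k \<Longrightarrow> \<alpha> (v(i := x + y)) = \<alpha> (v(i := x)) + \<alpha> (v(i := y))"
  using linear_add[OF kforms_linear] by blast

lemma kforms_scale: "\<alpha> \<in> kforms k \<Longrightarrow> i < k \<Longrightarrow> \<alpha> (v(i := c *\<^sub>R x)) = c * \<alpha> (v(i := x))"
  using linear_scale[OF kforms_linear] by fastforce

lemma kforms_transpose:
  assumes a: "\<alpha> \<in> kforms k" and ij: "i < k" "j < k" "i \<noteq> j"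
  shows "\<alpha> (w \<circ> Transposition.transpose i j) = - \<alpha> w"
proof -
  define g where "g x y = \<alpha> (w(i := x, j := y))" for x y
  have g_add_left: "g (x + x') y = g x y + g x' y" for x x' y
  proof -
    have "w(i := z, j := y) = (w(j := y))(i := z)" for z using ij by (auto simp: fun_eq_iff)
    then show ?thesis unfolding g_def using kforms_add[OF a ij(1), of "w(j := y)"] by simp
  qed
  have g_add_right: "g x (y + y') = g x y + g x y'" for x y y'
    unfolding g_def using kforms_add[OF a ij(2), of "w(i := x)"] by simp
  have g_diag: "g x x = 0" for x
    unfolding g_def by (rule kforms_eq_0_repeated[OF a ij]) (use ij in auto)
  have "0 = g (w i + w j) (w i + w j)" using g_diag by simp
  also have "\<dots> = g (w i) (w i + w j) + g (w j) (w i + w j)" by (rule g_add_left)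
  also have "\<dots> = g (w i) (w j) + g (w j) (w i)" using g_add_right g_diag by simp
  finally have "g (w j) (w i) = - g (w i) (w j)" by simp
  moreover have "w(i := w j, j := w i) = w \<circ> Transposition.transpose i j"
    using ij by (auto simp: fun_eq_iff Transposition.transpose_def)
  ultimately show ?thesis unfolding g_def by simp
qed

lemma kforms_permute:
  assumes a: "\<alpha> \<in> kforms k" and p: "p permutes {..<k}"
  shows "\<alpha> (w \<circ> p) = of_int (sign p) * \<alpha> w"
  using p finite_lessThan[of k]
proof (induction p arbitrary: w rule: permutes_induct)
  case id
  then show ?case by simp
next
  case (swap a b p)
  have "permutation p" using swap.hyps(4) permutation_permutes by blast
  then have sign: "sign (Transposition.transpose a b \<circ> p) = - sign p"
    using swap.hyps by (simp add: sign_compose[OF permutation_swap_id] sign_swap_id)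
  have "\<alpha> (w \<circ> (Transposition.transpose a b \<circ> p)) = \<alpha> ((w \<circ> Transposition.transpose a b) \<circ> p)"
    by (simp add: comp_assoc)
  also have "\<dots> = of_int (sign p) * \<alpha> (w \<circ> Transposition.transpose a b)" using swap.IH by blast
  also have "\<dots> = of_int (sign (Transposition.transpose a b \<circ> p)) * \<alpha> w"
    using kforms_transpose[OF a, of a b w] swap.hyps by (simp add: sign)
  finally show ?case .
qed

lemma permutes_extend:
  fixes k :: nat
  assumes "inj_on f {..<k}" "f ` {..<k} \<subseteq> {..<k}"
  shows "(\<lambda>i. if i < k then f i else i) permutes {..<k}"
proof (rule bij_imp_permutes)
  have "inj_on (\<lambda>i. if i < k then f i else i) {..<k}" using assms(1) by (auto simp: inj_on_def)
  moreover have "(\<lambda>i. if i < k then f i else i) ` {..<k} = f ` {..<k}" by auto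
  moreover have "f ` {..<k} = {..<k}" using endo_inj_surj[of "{..<k}" f] assms by simp
  ultimately show "bij_betw (\<lambda>i. if i < k then f i else i) {..<k} {..<k}" by (simp add: bij_betw_def)
qed auto

lemma kforms_reindex_inj:
  assumes a: "\<alpha> \<in> kforms k" and "inj_on f {..<k}" "f ` {..<k} \<subseteq> {..<k}"
  obtains s where "s \<noteq> 0" "\<alpha> (e \<circ> f) = s * \<alpha> e"
proof -
  define p where "p = (\<lambda>i. if i < k then f i else i)"
  have p: "p permutes {..<k}" unfolding p_def by (rule permutes_extend[OF assms(2,3)])
  have "\<alpha> (e \<circ> f) = \<alpha> (e \<circ> p)" by (rule kforms_cong[OF a]) (simp add: p_def)
  also have "\<dots> = of_int (sign p) * \<alpha> e" by (rule kforms_permute[OF a p])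
  finally show ?thesis by (intro that[of "of_int (sign p)"]) simp_all
qed

lemma kforms_reindex_non_inj:
  assumes a: "\<alpha> \<in> kforms k" and "\<not> inj_on f {..<k}"
  shows "\<alpha> (e \<circ> f) = 0"
proof -
  obtain i j where "i < k" "j < k" "i \<noteq> j" "f i = f j" using assms(2) unfolding inj_on_def by blast
  then show ?thesis by (intro kforms_eq_0_repeated[OF a, of i j]) auto
qed

lemma kforms_eq_0_if_entry_in_kernel:
  assumes a: "\<alpha> \<in> kforms k" and Y: "Y \<in> form_kernel \<alpha>" and j: "j < k" "w j = Y"
  shows "\<alpha> w = 0"
proof -
  have first_slot: "\<alpha> u = 0" if "u 0 = Y" for u
  proof -
    have "case_nat (u 0) (\<lambda>i. u (Suc i)) = u" by (auto simp: fun_eq_iff split: nat.split)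
    then have "\<alpha> u = contr Y \<alpha> (\<lambda>i. u (Suc i))" using that by (simp add: contr_def)
    then show ?thesis using Y by (simp add: form_kernel_def)
  qed
  show ?thesis
  proof (cases "j = 0")
    case True
    then show ?thesis using first_slot j by simp
  next
    case False
    have "\<alpha> (w \<circ> Transposition.transpose 0 j) = 0" by (rule first_slot) (use j in simp)
    then show ?thesis using kforms_transpose[OF a, of 0 j w] False j by simp
  qed
qed

text \<open>The entries of the argument are replaced by elements of \<open>e\<close> one at a time; each replacement
  changes the value by a term with an entry in \<open>K\<close>.\<close>

lemma kforms_eq_0_from_frame:
  assumes a: "\<alpha> \<in> kforms k" and K: "K \<subseteq> form_kernel \<alpha>"
    and span: "\<And>x. \<exists>b\<in>span (e ` {..<m}). x - b \<in> K"
    and frame: "\<And>f. \<forall>i<k. f i < m \<Longrightarrow> \<alpha> (e \<circ> f) = 0"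
  shows "\<alpha> w = 0"
proof -
  have "\<forall>w. (\<forall>i. j \<le> i \<and> i < k \<longrightarrow> w i \<in> e ` {..<m}) \<longrightarrow> \<alpha> w = 0" if "j \<le> k" for j
    using that
  proof (induction j)
    case 0
    show ?case
    proof (intro allI impI)
      fix w assume h: "\<forall>i. 0 \<le> i \<and> i < k \<longrightarrow> w i \<in> e ` {..<m}"
      define f where "f i = (SOME l. l < m \<and> w i = e l)" for i
      have f: "\<forall>i<k. f i < m \<and> w i = e (f i)"
      proof (intro allI impI)
        fix i assume "i < k"
        then obtain l where "l < m" "w i = e l" using h by blast
        then show "f i < m \<and> w i = e (f i)" unfolding f_def by (metis (mono_tags, lifting) someI)
      qed
      then have "\<alpha> w = \<alpha> (e \<circ> f)" by (intro kforms_cong[OF a]) auto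
      then show "\<alpha> w = 0" using frame f by simp
    qed
  next
    case (Suc j)
    then have jk: "j < k" by simp
    show ?case
    proof (intro allI impI)
      fix w assume h: "\<forall>i. Suc j \<le> i \<and> i < k \<longrightarrow> w i \<in> e ` {..<m}"
      obtain b where b: "b \<in> span (e ` {..<m})" "w j - b \<in> K" using span by blast
      have sub: "subspace {y. \<alpha> (w(j := y)) = 0}"
        using linear_subspace_kernel[OF kforms_linear[OF a jk, of w]] by simp
      have "e ` {..<m} \<subseteq> {y. \<alpha> (w(j := y)) = 0}"
        using Suc.IH jk h by (auto simp: not_less_eq_eq le_Suc_eq)
      then have b0: "\<alpha> (w(j := b)) = 0" using span_minimal[OF _ sub] b(1) by blast
      have rest0: "\<alpha> (w(j := w j - b)) = 0"
        by (rule kforms_eq_0_if_entry_in_kernel[OF a _ jk]) (use b K in auto)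
      have "\<alpha> w = \<alpha> (w(j := b + (w j - b)))" by simp
      also have "\<dots> = 0" using kforms_add[OF a jk, of w b "w j - b"] b0 rest0 by simp
      finally show "\<alpha> w = 0" .
    qed
  qed
  from this[of k] show ?thesis by force
qed

lemma kforms_eq_0_low_rank:
  assumes a: "\<alpha> \<in> kforms k" and K: "K \<subseteq> form_kernel \<alpha>"
    and span: "\<And>x. \<exists>b\<in>span (e ` {..<m}). x - b \<in> K" and mk: "m < k"
  shows "\<alpha> w = 0"
proof (rule kforms_eq_0_from_frame[OF a K span])
  fix f assume f: "\<forall>i<k. f i < m"
  have "card (f ` {..<k}) \<le> card {..<m}" using f by (intro card_mono) auto
  then have "\<not> inj_on f {..<k}" using mk by (intro pigeonhole) simp
  then show "\<alpha> (e \<circ> f) = 0" by (rule kforms_reindex_non_inj[OF a])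
qed

lemma Ann_UNIV:
  assumes "0 < k" "\<alpha> \<in> Ann k UNIV"
  shows "\<alpha> = (\<lambda>v. 0)"
proof
  fix w
  show "\<alpha> w = 0"
    by (rule kforms_eq_0_low_rank[of \<alpha> k UNIV "\<lambda>i. 0" 0])
      (use assms in \<open>auto simp: Ann_def form_kernel_def\<close>)
qed

lemma kforms_zero: "(\<lambda>v. 0) \<in> kforms k"
  unfolding kforms_def by (auto intro: linearI)

lemma kforms_lincomb:
  assumes "\<alpha> \<in> kforms k" "\<beta> \<in> kforms k"
  shows "(\<lambda>v. a * \<alpha> v + b * \<beta> v) \<in> kforms k"
  unfolding kforms_def
proof (intro CollectI conjI allI impI)
  fix v w :: "nat \<Rightarrow> 'a" assume "\<forall>i<k. v i = w i"
  then show "a * \<alpha> v + b * \<beta> v = a * \<alpha> w + b * \<beta> w"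
    using kforms_cong[OF assms(1)] kforms_cong[OF assms(2)] by metis
next
  fix i and v :: "nat \<Rightarrow> 'a" assume i: "i < k"
  show "linear (\<lambda>x. a * \<alpha> (v(i := x)) + b * \<beta> (v(i := x)))"
    by (rule linearI)
      (simp_all add: kforms_add[OF assms(1) i] kforms_add[OF assms(2) i]
        kforms_scale[OF assms(1) i] kforms_scale[OF assms(2) i] algebra_simps)
next
  fix v :: "nat \<Rightarrow> 'a" and i j assume "i < k \<and> j < k \<and> i \<noteq> j \<and> v i = v j"
  then have "\<alpha> v = 0" "\<beta> v = 0"
    using kforms_eq_0_repeated[OF assms(1)] kforms_eq_0_repeated[OF assms(2)] by blast+
  then show "a * \<alpha> v + b * \<beta> v = 0" by simp
qed

section \<open>Contraction\<close>

lemma case_nat_eq_fun_upd_0: "case_nat X v = (case_nat Y v)(0 := X)"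
  by (auto simp: fun_eq_iff split: nat.split)

lemma case_nat_fun_upd_Suc: "case_nat X (v(i := x)) = (case_nat X v)(Suc i := x)"
  by (auto simp: fun_eq_iff split: nat.split)

lemma contr_in_kforms:
  assumes a: "\<alpha> \<in> kforms (Suc k)"
  shows "contr X \<alpha> \<in> kforms k"
  unfolding kforms_def contr_def
proof (intro CollectI conjI allI impI)
  fix v w :: "nat \<Rightarrow> 'a" assume "\<forall>i<k. v i = w i"
  then show "\<alpha> (case_nat X v) = \<alpha> (case_nat X w)"
    by (intro kforms_cong[OF a]) (auto split: nat.split)
next
  fix i and v :: "nat \<Rightarrow> 'a" assume "i < k"
  then show "linear (\<lambda>x. \<alpha> (case_nat X (v(i := x))))"
    unfolding case_nat_fun_upd_Suc using kforms_linear[OF a, of "Suc i"] by simp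
next
  fix v :: "nat \<Rightarrow> 'a" and i j assume "i < k \<and> j < k \<and> i \<noteq> j \<and> v i = v j"
  then show "\<alpha> (case_nat X v) = 0" by (intro kforms_eq_0_repeated[OF a, of "Suc i" "Suc j"]) simp_all
qed

lemma contr_add:
  assumes a: "\<alpha> \<in> kforms (Suc k)"
  shows "contr (X + Y) \<alpha> v = contr X \<alpha> v + contr Y \<alpha> v"
proof -
  have e: "\<alpha> (case_nat Z v) = \<alpha> ((case_nat 0 v)(0 := Z))" for Z
    by (rule arg_cong[where f = \<alpha>], rule case_nat_eq_fun_upd_0)
  show ?thesis
    unfolding contr_def using kforms_add[OF a, of 0 "case_nat 0 v" X Y] e[of "X + Y"] e[of X] e[of Y] by simp
qed

lemma contr_scale:
  assumes a: "\<alpha> \<in> kforms (Suc k)"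
  shows "contr (c *\<^sub>R X) \<alpha> v = c * contr X \<alpha> v"
proof -
  have e: "\<alpha> (case_nat Z v) = \<alpha> ((case_nat 0 v)(0 := Z))" for Z
    by (rule arg_cong[where f = \<alpha>], rule case_nat_eq_fun_upd_0)
  show ?thesis
    unfolding contr_def using kforms_scale[OF a, of 0 "case_nat 0 v" c X] e[of "c *\<^sub>R X"] e[of X] by simp
qed

lemma contr_zero:
  assumes a: "\<alpha> \<in> kforms (Suc k)"
  shows "contr 0 \<alpha> v = 0"
  using contr_scale[OF a, of 0 0 v] by simp

lemma contr_diff:
  assumes a: "\<alpha> \<in> kforms (Suc k)"
  shows "contr (X - Y) \<alpha> v = contr X \<alpha> v - contr Y \<alpha> v"
  using contr_add[OF a, of "X - Y" Y v] by simp

lemma contr_sum: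
  assumes a: "\<alpha> \<in> kforms (Suc k)" and I: "finite I"
  shows "contr (\<Sum>i\<in>I. c i *\<^sub>R X i) \<alpha> v = (\<Sum>i\<in>I. c i * contr (X i) \<alpha> v)"
  using I by induction (simp_all add: contr_zero[OF a] contr_add[OF a] contr_scale[OF a])

lemma contr_anticomm:
  assumes a: "\<alpha> \<in> kforms (Suc (Suc k))"
  shows "contr X (contr Y \<alpha>) v = - contr Y (contr X \<alpha>) v"
proof -
  have "case_nat Y (case_nat X v) \<circ> Transposition.transpose 0 1 = case_nat X (case_nat Y v)"
    by (auto simp: fun_eq_iff Transposition.transpose_def split: nat.split)
  then show ?thesis unfolding contr_def
    using kforms_transpose[OF a, of 0 1 "case_nat Y (case_nat X v)"] by simp
qed

lemma contr_zero_form: "contr X (\<lambda>v. 0) = (\<lambda>v. 0)"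
  by (simp add: contr_def)

lemma subspace_form_kernel:
  assumes "\<omega> \<in> kforms (Suc k)"
  shows "subspace (form_kernel \<omega>)"
  unfolding subspace_def form_kernel_def
  by (simp add: fun_eq_iff contr_zero[OF assms] contr_add[OF assms] contr_scale[OF assms])

lemma contr_in_Ann_form_kernel:
  assumes w: "\<omega> \<in> kforms (Suc (Suc k))"
  shows "contr X \<omega> \<in> Ann (Suc k) (form_kernel \<omega>)"
  unfolding Ann_def
proof (intro CollectI conjI ballI)
  show "contr X \<omega> \<in> kforms (Suc k)" by (rule contr_in_kforms[OF w])
next
  fix Y assume "Y \<in> form_kernel \<omega>"
  then have "contr Y \<omega> (case_nat X u) = 0" for u by (simp add: form_kernel_def)
  then show "contr Y (contr X \<omega>) = (\<lambda>v. 0)"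
    using contr_anticomm[OF w, of Y X] by (simp add: contr_def fun_eq_iff)
qed

section \<open>Wedge products of linear functionals\<close>

lemma linear_wedge1:
  assumes \<theta>: "\<And>i. i < m \<Longrightarrow> linear (\<theta> i)" and i: "i < m"
  shows "linear (\<lambda>x. wedge1 m \<theta> (v(i := x)))"
proof -
  have "linear (\<lambda>x. of_int (sign p) * (\<Prod>l<m. \<theta> l ((v(i := x)) (p l))))" if p: "p permutes {..<m}" for p
  proof -
    define l0 where "l0 = inv p i"
    have l0: "l0 < m" "p l0 = i" unfolding l0_def
      using permutes_in_image[OF permutes_inv[OF p], of i] i permutes_inverses(1)[OF p] by auto
    have "(\<Prod>l<m. \<theta> l ((v(i := x)) (p l))) = \<theta> l0 x * (\<Prod>l\<in>{..<m}-{l0}. \<theta> l (v (p l)))" for x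
    proof -
      have "(\<Prod>l\<in>{..<m}-{l0}. \<theta> l ((v(i := x)) (p l))) = (\<Prod>l\<in>{..<m}-{l0}. \<theta> l (v (p l)))"
      proof (rule prod.cong)
        fix l assume "l \<in> {..<m}-{l0}"
        then have "p l \<noteq> i" using l0 permutes_inj[OF p] by (auto dest: injD)
        then show "\<theta> l ((v(i := x)) (p l)) = \<theta> l (v (p l))" by simp
      qed simp
      then show ?thesis using l0 by (simp add: prod.remove)
    qed
    moreover have "linear (\<lambda>x. of_int (sign p) * (\<theta> l0 x * c))" for c
      using linear_compose[OF \<theta>[OF l0(1)] bounded_linear.linear[OF bounded_linear_mult_left]]
        linear_compose[OF _ bounded_linear.linear[OF bounded_linear_mult_right]]
      by (auto simp: o_def)
    ultimately show ?thesis by simp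
  qed
  then show ?thesis unfolding wedge1_def by (intro linear_compose_sum) auto
qed

lemma wedge1_eq_0_repeated:
  assumes ij: "i < m" "j < m" "i \<noteq> j" and v: "v i = v j"
  shows "wedge1 m \<theta> v = 0"
proof -
  define f where "f p = of_int (sign p) * (\<Prod>l<m. \<theta> l (v (p l)))" for p :: "nat \<Rightarrow> nat"
  define \<tau> where "\<tau> = Transposition.transpose i j"
  have \<tau>: "\<tau> permutes {..<m}" unfolding \<tau>_def using ij by (intro permutes_swap_id) auto
  have v\<tau>: "v (\<tau> y) = v y" for y unfolding \<tau>_def using v by (auto simp: Transposition.transpose_def)
  have f\<tau>: "f (\<tau> \<circ> p) = - f p" if "permutation p" for p
  proof -
    have "sign (\<tau> \<circ> p) = - sign p" unfolding \<tau>_def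
      using ij that by (simp add: sign_compose[OF permutation_swap_id] sign_swap_id)
    then show ?thesis unfolding f_def using v\<tau> by simp
  qed
  have "sum f {p. p permutes {..<m}} = sum (\<lambda>p. f (\<tau> \<circ> p)) {p. p permutes {..<m}}"
    by (rule setum_permutations_compose_left[OF \<tau>])
  also have "\<dots> = sum (\<lambda>p. - f p) {p. p permutes {..<m}}"
    using f\<tau> permutation_permutes by (intro sum.cong) blast+
  finally have "sum f {p. p permutes {..<m}} = 0" by (simp add: sum_negf)
  then show ?thesis unfolding wedge1_def f_def by simp
qed

lemma wedge1_in_kforms:
  fixes \<theta> :: "nat \<Rightarrow> 'a::euclidean_space \<Rightarrow> real"
  assumes \<theta>: "\<And>i. i < m \<Longrightarrow> linear (\<theta> i)"
  shows "wedge1 m \<theta> \<in> kforms m"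
  unfolding kforms_def
proof (intro CollectI conjI allI impI)
  fix v w :: "nat \<Rightarrow> 'a" assume h: "\<forall>i<m. v i = w i"
  show "wedge1 m \<theta> v = wedge1 m \<theta> w" unfolding wedge1_def
  proof (rule sum.cong)
    fix p assume "p \<in> {p. p permutes {..<m}}"
    then have "\<forall>l<m. p l < m" using permutes_in_image by fastforce
    then show "of_int (sign p) * (\<Prod>i<m. \<theta> i (v (p i))) = of_int (sign p) * (\<Prod>i<m. \<theta> i (w (p i)))"
      using h by (auto intro!: prod.cong)
  qed simp
next
  fix i and v :: "nat \<Rightarrow> 'a" assume "i < m"
  then show "linear (\<lambda>x. wedge1 m \<theta> (v(i := x)))" using linear_wedge1[of m \<theta> i v] \<theta> by blast
next
  fix v :: "nat \<Rightarrow> 'a" and i j assume "i < m \<and> j < m \<and> i \<noteq> j \<and> v i = v j"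
  then show "wedge1 m \<theta> v = 0" using wedge1_eq_0_repeated by blast
qed

lemma wedge1_eq_0_row:
  assumes i: "i < m" and z: "\<And>j. j < m \<Longrightarrow> \<theta> i (v j) = 0"
  shows "wedge1 m \<theta> v = 0"
  unfolding wedge1_def
proof (rule sum.neutral, rule ballI)
  fix p assume "p \<in> {p. p permutes {..<m}}"
  then have "p i < m" using permutes_in_image i by fastforce
  then have "(\<Prod>l<m. \<theta> l (v (p l))) = 0" using i z by (intro prod_zero) auto
  then show "of_int (sign p) * (\<Prod>l<m. \<theta> l (v (p l))) = 0" by simp
qed

lemma wedge1_eq_0_column:
  assumes j: "j < m" and z: "\<And>i. i < m \<Longrightarrow> \<theta> i (v j) = 0"
  shows "wedge1 m \<theta> v = 0"
  unfolding wedge1_def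
proof (rule sum.neutral, rule ballI)
  fix p assume "p \<in> {p. p permutes {..<m}}"
  then have "inv p j < m" "p (inv p j) = j"
    using permutes_in_image[OF permutes_inv, of p "{..<m}" j] j permutes_inverses(1)[of p "{..<m}" j]
    by auto
  then have "(\<Prod>l<m. \<theta> l (v (p l))) = 0" using z by (intro prod_zero bexI[of _ "inv p j"]) auto
  then show "of_int (sign p) * (\<Prod>l<m. \<theta> l (v (p l))) = 0" by simp
qed

lemma wedge1_dual:
  assumes d: "\<And>i j. i < m \<Longrightarrow> j < m \<Longrightarrow> \<theta> i (v j) = (if i = j then 1 else 0)"
  shows "wedge1 m \<theta> v = 1"
proof -
  have "wedge1 m \<theta> v = (\<Sum>p\<in>{p. p permutes {..<m}}. if p = id then 1 else 0)"
    unfolding wedge1_def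
  proof (rule sum.cong)
    fix p assume p: "p \<in> {p. p permutes {..<m}}"
    show "of_int (sign p) * (\<Prod>i<m. \<theta> i (v (p i))) = (if p = id then 1 else 0)"
    proof (cases "p = id")
      case True
      then show ?thesis using d by simp
    next
      case False
      then obtain l where l: "p l \<noteq> l" by (auto simp: fun_eq_iff)
      then have "l < m" using p permutes_not_in by fastforce
      moreover have "p l < m" using p \<open>l < m\<close> permutes_in_image by fastforce
      ultimately have "(\<Prod>i<m. \<theta> i (v (p i))) = 0" using d l by (intro prod_zero bexI[of _ l]) auto
      then show ?thesis using False by simp
    qed
  qed simp
  also have "\<dots> = 1"
    using permutes_id[of "{..<m}"] finite_permutations[of "{..<m}"] by (simp add: sum.delta)
  finally show ?thesis .
qed

lemma wedge1_scale_first: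
  assumes m: "0 < m"
  shows "wedge1 m (\<theta>(0 := (\<lambda>x. c * \<theta> 0 x))) v = c * wedge1 m \<theta> v"
proof -
  have "(\<Prod>i<m. (\<theta>(0 := (\<lambda>x. c * \<theta> 0 x))) i (v (p i))) = c * (\<Prod>i<m. \<theta> i (v (p i)))" for p
  proof -
    have "(\<Prod>i<m. (\<theta>(0 := (\<lambda>x. c * \<theta> 0 x))) i (v (p i)))
       = (\<Prod>i\<in>insert 0 ({..<m}-{0}). (\<theta>(0 := (\<lambda>x. c * \<theta> 0 x))) i (v (p i)))"
      using m by (intro prod.cong) auto
    also have "\<dots> = c * \<theta> 0 (v (p 0)) * (\<Prod>i\<in>{..<m}-{0}. \<theta> i (v (p i)))"
      by (subst prod.insert) (auto intro!: prod.cong)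
    also have "\<dots> = c * (\<Prod>i\<in>insert 0 ({..<m}-{0}). \<theta> i (v (p i)))"
      by (subst prod.insert) auto
    also have "insert 0 ({..<m}-{0}) = {..<m}" using m by auto
    finally show ?thesis .
  qed
  then show ?thesis unfolding wedge1_def by (simp add: sum_distrib_left algebra_simps)
qed

lemma wedge1_inner_in_kforms: "wedge1 m (\<lambda>i x. a i \<bullet> x) \<in> kforms m"
  by (rule wedge1_in_kforms) (rule bounded_linear.linear[OF bounded_linear_inner_right])

lemma wedge1_inner_in_Ann:
  assumes "0 < k" "\<And>i Y. i < k \<Longrightarrow> Y \<in> K \<Longrightarrow> a i \<bullet> Y = 0"
  shows "wedge1 k (\<lambda>i x. a i \<bullet> x) \<in> Ann k K"
  unfolding Ann_def
proof (intro CollectI conjI ballI)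
  show "wedge1 k (\<lambda>i x. a i \<bullet> x) \<in> kforms k" by (rule wedge1_inner_in_kforms)
next
  fix Y assume "Y \<in> K"
  then show "contr Y (wedge1 k (\<lambda>i x. a i \<bullet> x)) = (\<lambda>v. 0)"
    unfolding contr_def using assms by (intro ext wedge1_eq_0_column[of 0]) auto
qed

lemma decomposable_zero: "decomposable (Suc k) (\<lambda>v. 0)"
  unfolding decomposable_def
proof (intro exI[of _ "\<lambda>i x. 0"] conjI allI impI)
  show "linear (\<lambda>x::'a. 0::real)" for i by (rule linearI) auto
  show "(\<lambda>v. 0) = wedge1 (Suc k) (\<lambda>i (x::'a). 0::real)"
    by (rule ext, rule sym, rule wedge1_eq_0_row[of 0]) auto
qed

section \<open>Linear algebra\<close>

definition orthonormal_complement :: "'v::euclidean_space set \<Rightarrow> (nat \<Rightarrow> 'v) \<Rightarrow> nat \<Rightarrow> bool" where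
  "orthonormal_complement K e m \<longleftrightarrow>
     (\<forall>i<m. \<forall>j<m. e i \<bullet> e j = (if i = j then 1 else 0)) \<and>
     (\<forall>i<m. \<forall>Y\<in>K. e i \<bullet> Y = 0) \<and>
     (\<forall>x. \<exists>b\<in>span (e ` {..<m}). x - b \<in> K)"

lemma orthonormal_complementD:
  assumes "orthonormal_complement K e m"
  shows "\<And>i j. i < m \<Longrightarrow> j < m \<Longrightarrow> e i \<bullet> e j = (if i = j then 1 else 0)"
    and "\<And>i Y. i < m \<Longrightarrow> Y \<in> K \<Longrightarrow> e i \<bullet> Y = 0"
    and "\<And>x. \<exists>b\<in>span (e ` {..<m}). x - b \<in> K"
  using assms unfolding orthonormal_complement_def by blast+

lemma exists_orthogonal_part:
  fixes K E :: "'v::euclidean_space set"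
  assumes "subspace K" "subspace E" "K \<subseteq> E" "y \<in> E"
  obtains z where "z \<in> E" "\<And>Y. Y \<in> K \<Longrightarrow> z \<bullet> Y = 0" "y - z \<in> K"
proof -
  obtain a z where az: "a \<in> span K" "\<And>w. w \<in> span K \<Longrightarrow> orthogonal z w" "y = a + z"
    using orthogonal_subspace_decomp_exists[of K y] by metis
  have "a \<in> K" using az(1) assms(1) by (metis span_eq_iff)
  moreover have "z = y - a" using az(3) by simp
  ultimately have "z \<in> E" using assms by (metis subsetD subspace_diff)
  then show ?thesis using az \<open>a \<in> K\<close> span_base[of _ K] by (intro that) (auto simp: orthogonal_def)
qed

lemma obtain_orthonormal_complement:
  fixes K :: "'v::euclidean_space set"
  assumes K: "subspace K"
  obtains e m where "m + dim K = DIM('v)" "orthonormal_complement K e m"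
proof -
  define U where "U = {y. \<forall>x\<in>K. orthogonal x y}"
  have U: "subspace U" unfolding U_def by (rule subspace_orthogonal_to_vectors)
  have dU: "dim U + dim K = DIM('v)"
    using dim_subspace_orthogonal_to_vectors[OF K subspace_UNIV] unfolding U_def by simp
  obtain B where B: "B \<subseteq> U" "pairwise orthogonal B" "\<And>x. x \<in> B \<Longrightarrow> norm x = 1"
    "independent B" "card B = dim U" "span B = U"
    using orthonormal_basis_subspace[OF U] by metis
  have "finite B" using B(4) by (rule independent_imp_finite)
  then obtain h where h: "bij_betw h {0..<card B} B" using ex_bij_betw_nat_finite by blast
  have img: "h ` {..<dim U} = B" using h B(5) unfolding bij_betw_def by (simp add: lessThan_atLeast0)
  have "orthonormal_complement K h (dim U)"
    unfolding orthonormal_complement_def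
  proof (intro conjI allI impI ballI)
    fix i j assume ij: "i < dim U" "j < dim U"
    then have hi: "h i \<in> B" "h j \<in> B" using img by auto
    show "h i \<bullet> h j = (if i = j then 1 else 0)"
    proof (cases "i = j")
      case True
      then show ?thesis using B(3)[OF hi(1)] by (simp add: norm_eq_1)
    next
      case False
      then have "h i \<noteq> h j" using h ij B(5) unfolding bij_betw_def inj_on_def by auto
      then show ?thesis using B(2) hi False unfolding pairwise_def orthogonal_def by auto
    qed
  next
    fix i Y assume "i < dim U" "Y \<in> K"
    then show "h i \<bullet> Y = 0" using img B(1) unfolding U_def orthogonal_def by (auto simp: inner_commute)
  next
    fix x
    obtain z where z: "\<And>Y. Y \<in> K \<Longrightarrow> z \<bullet> Y = 0" "x - z \<in> K"
      using exists_orthogonal_part[OF K subspace_UNIV] by blast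
    have "z \<in> span (h ` {..<dim U})"
      using z(1) img B(6) unfolding U_def orthogonal_def by (auto simp: inner_commute)
    then show "\<exists>b\<in>span (h ` {..<dim U}). x - b \<in> K" using z(2) by blast
  qed
  then show ?thesis using dU by (intro that)
qed

lemma dim_span_image_le: "dim (span (e ` {..<m})) \<le> m"
  using dim_le_card'[of "e ` {..<m}"] card_image_le[of "{..<m}" e] by simp

lemma exists_nontrivial_relation:
  fixes f :: "'i \<Rightarrow> 'v::euclidean_space"
  assumes I: "finite I" and fP: "f ` I \<subseteq> P" and P: "subspace P" and card: "dim P < card I"
  obtains c where "\<exists>i\<in>I. c i \<noteq> 0" "(\<Sum>i\<in>I. c i *\<^sub>R f i) = 0"
proof (cases "inj_on f I")
  case False
  then obtain i j where ij: "i \<in> I" "j \<in> I" "i \<noteq> j" "f i = f j" unfolding inj_on_def by blast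
  define c where "c l = (if l = i then 1 else if l = j then -1 else (0::real))" for l
  have "c l *\<^sub>R f l = (if l = i then f i else 0) - (if l = j then f j else 0)" for l
    using ij unfolding c_def by auto
  then have "(\<Sum>l\<in>I. c l *\<^sub>R f l) = f i - f j" using ij I by (simp add: sum_subtractf sum.delta)
  then show ?thesis using ij by (intro that[of c]) (auto simp: c_def)
next
  case True
  then have "dependent (f ` I)"
    using independent_card_le_dim[OF fP] card card_image[OF True] by (metis not_le)
  then obtain u where u: "\<exists>v\<in>f ` I. u v \<noteq> 0" "(\<Sum>v\<in>f ` I. u v *\<^sub>R v) = 0"
    using dependent_finite[of "f ` I"] I by auto
  have "(\<Sum>i\<in>I. u (f i) *\<^sub>R f i) = (\<Sum>v\<in>f ` I. u v *\<^sub>R v)"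
    by (simp add: sum.reindex[OF True])
  then show ?thesis using u by (intro that[of "u \<circ> f"]) auto
qed

lemma linear_functional_eq_inner:
  fixes \<theta> :: "'v::euclidean_space \<Rightarrow> real"
  assumes "linear \<theta>"
  shows "\<exists>a. \<forall>x. \<theta> x = a \<bullet> x"
proof (intro exI allI)
  fix x
  have "\<theta> x = \<theta> (\<Sum>b\<in>Basis. (x \<bullet> b) *\<^sub>R b)" by (simp add: euclidean_representation)
  also have "\<dots> = (\<Sum>b\<in>Basis. (x \<bullet> b) * \<theta> b)"
    using assms by (simp add: linear_sum linear_scale)
  also have "\<dots> = (\<Sum>b\<in>Basis. \<theta> b *\<^sub>R b) \<bullet> x"
    by (simp add: inner_sum_left inner_sum_right inner_commute mult.commute)
  finally show "\<theta> x = (\<Sum>b\<in>Basis. \<theta> b *\<^sub>R b) \<bullet> x" .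
qed

lemma le_binomial:
  fixes n j :: nat
  assumes "1 \<le> j" "j < n"
  shows "n \<le> n choose j"
  using assms
proof (induction n arbitrary: j)
  case 0
  then show ?case by simp
next
  case (Suc n)
  show ?case
  proof (cases "j = 1")
    case True
    then show ?thesis by (simp add: choose_one)
  next
    case False
    then obtain j' where j': "j = Suc j'" "1 \<le> j'" using Suc.prems by (cases j) auto
    show ?thesis
    proof (cases "j' = n - 1")
      case True
      then have "Suc n choose j = Suc n choose (Suc n - j)"
        using Suc.prems by (intro binomial_symmetric) simp
      also have "Suc n - j = 1" using True j' Suc.prems by simp
      finally show ?thesis by (simp add: choose_one)
    next
      case False
      have "n \<le> n choose j'" using Suc.IH[of j'] j' False Suc.prems by simp
      moreover have "0 < n choose Suc j'" using j' Suc.prems by (intro zero_less_binomial) simp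
      moreover have "Suc n choose j = (n choose j') + (n choose Suc j')" using j' by simp
      ultimately show ?thesis by linarith
    qed
  qed
qed

lemma less_binomial:
  fixes m k :: nat
  assumes "2 \<le> k" "k + 2 \<le> m"
  shows "m < m choose k"
proof -
  obtain m' k' where mk: "m = Suc m'" "k = Suc k'" using assms by (cases m; cases k) auto
  have "m' \<le> m' choose k'" "m' \<le> m' choose k" using assms mk by (intro le_binomial; simp)+
  then show ?thesis using assms mk by simp
qed

definition set_enum :: "nat set \<Rightarrow> nat \<Rightarrow> nat" where
  "set_enum S i = sorted_list_of_set S ! i"

lemma set_enum:
  assumes "finite S" "card S = k"
  shows "set_enum S ` {..<k} = S" "inj_on (set_enum S) {..<k}"
proof -
  have l: "length (sorted_list_of_set S) = k" using assms by simp
  have "set_enum S ` {..<k} = set (sorted_list_of_set S)" unfolding set_enum_def set_conv_nth l by auto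
  then show "set_enum S ` {..<k} = S" using assms by simp
  show "inj_on (set_enum S) {..<k}" unfolding set_enum_def
    by (rule inj_on_nth) (use l assms in auto)
qed

section \<open>Decomposable forms\<close>

text \<open>Throughout, \<open>e\<^sub>0, \<dots>, e\<^sub>m\<^sub>-\<^sub>1\<close> is an orthonormal basis of the orthogonal complement of
  \<open>ker \<omega>\<close>, so \<open>m\<close> is the rank of \<open>\<omega>\<close>.\<close>

lemma form_eq_0_low_rank:
  assumes w: "\<omega> \<in> kforms (Suc k)" and c: "orthonormal_complement (form_kernel \<omega>) e m" and "m \<le> k"
  shows "\<omega> = (\<lambda>v. 0)"
proof
  fix v
  show "\<omega> v = 0"
    by (rule kforms_eq_0_low_rank[OF w _ orthonormal_complementD(3)[OF c]]) (use \<open>m \<le> k\<close> in auto)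
qed

lemma top_rank_form_eq:
  assumes w: "\<omega> \<in> kforms (Suc k)" and c: "orthonormal_complement (form_kernel \<omega>) e (Suc k)"
  shows "\<omega> = (\<lambda>v. \<omega> e * wedge1 (Suc k) (\<lambda>i x. e i \<bullet> x) v)"
proof -
  note orth = orthonormal_complementD(1)[OF c] and perp = orthonormal_complementD(2)[OF c]
  define W where "W = wedge1 (Suc k) (\<lambda>i x. e i \<bullet> x)"
  define D where "D = (\<lambda>v. 1 * \<omega> v + (- \<omega> e) * W v)"
  have Dk: "D \<in> kforms (Suc k)"
    unfolding D_def W_def by (rule kforms_lincomb[OF w wedge1_inner_in_kforms])
  have "W e = 1" unfolding W_def by (rule wedge1_dual) (use orth in auto)
  then have De: "D e = 0" unfolding D_def by simp
  have D0: "D v = 0" for v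
  proof (rule kforms_eq_0_from_frame[OF Dk _ orthonormal_complementD(3)[OF c]])
    show "form_kernel \<omega> \<subseteq> form_kernel D"
    proof
      fix Y assume Y: "Y \<in> form_kernel \<omega>"
      have "contr Y W u = 0" for u unfolding W_def contr_def
        by (rule wedge1_eq_0_column[of 0]) (use perp Y in auto)
      then show "Y \<in> form_kernel D" using Y by (simp add: form_kernel_def D_def contr_def fun_eq_iff)
    qed
  next
    fix f assume f: "\<forall>i<Suc k. f i < Suc k"
    show "D (e \<circ> f) = 0"
    proof (cases "inj_on f {..<Suc k}")
      case True
      with f obtain s where "D (e \<circ> f) = s * D e" using kforms_reindex_inj[OF Dk] by blast
      then show ?thesis using De by simp
    next
      case False
      then show ?thesis by (rule kforms_reindex_non_inj[OF Dk])
    qed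
  qed
  have "\<omega> v = \<omega> e * W v" for v using D0[of v] by (simp add: D_def)
  then show ?thesis unfolding W_def by (rule ext)
qed

lemma top_rank_decomposable:
  assumes w: "\<omega> \<in> kforms (Suc k)" and c: "orthonormal_complement (form_kernel \<omega>) e (Suc k)"
  shows "decomposable (Suc k) \<omega>"
  unfolding decomposable_def
proof (intro exI conjI allI impI)
  define \<theta> where "\<theta> = (\<lambda>i x. e i \<bullet> x)(0 := (\<lambda>x. \<omega> e * (e 0 \<bullet> x)))"
  show "linear (\<theta> i)" for i
    unfolding \<theta>_def by (auto intro!: linearI simp: inner_add_right algebra_simps)
  show "\<omega> = wedge1 (Suc k) \<theta>"
  proof
    fix v
    have "\<omega> v = \<omega> e * wedge1 (Suc k) (\<lambda>i x. e i \<bullet> x) v"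
      using fun_cong[OF top_rank_form_eq[OF w c], of v] by (simp only:)
    also have "\<dots> = wedge1 (Suc k) \<theta> v"
      unfolding \<theta>_def using wedge1_scale_first[of "Suc k" "\<lambda>i x. e i \<bullet> x" "\<omega> e" v] by simp
    finally show "\<omega> v = wedge1 (Suc k) \<theta> v" .
  qed
qed

definition skip_index :: "nat \<Rightarrow> nat \<Rightarrow> nat" where
  "skip_index j i = (if i < j then i else Suc i)"

lemma contr_frame_skip_index:
  assumes w: "\<omega> \<in> kforms (Suc k)" and "l \<le> k" "j \<le> k"
  shows "contr (e l) \<omega> (e \<circ> skip_index j) = (if l = j then \<omega> (e \<circ> case_nat j (skip_index j)) else 0)"
proof (cases "l = j")
  case False
  define i where "i = (if l < j then l else l - 1)"
  have i: "i < k" "skip_index j i = l" using assms False unfolding i_def skip_index_def by auto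
  have "\<not> inj_on (case_nat l (skip_index j)) {..<Suc k}"
    using i unfolding inj_on_def by (metis lessThan_iff nat.distinct(1) nat.simps(4,5) not_less_eq zero_less_Suc)
  then have "\<omega> (e \<circ> case_nat l (skip_index j)) = 0" by (rule kforms_reindex_non_inj[OF w])
  moreover have "case_nat (e l) (e \<circ> skip_index j) = e \<circ> case_nat l (skip_index j)"
    by (auto simp: fun_eq_iff split: nat.split)
  ultimately show ?thesis using False by (simp add: contr_def)
qed (auto simp: contr_def fun_eq_iff split: nat.split intro!: arg_cong[where f = \<omega>])

lemma top_rank_form_frame_nonzero:
  assumes w: "\<omega> \<in> kforms (Suc k)" and c: "orthonormal_complement (form_kernel \<omega>) e (Suc k)"
    and j: "j \<le> k"
  shows "\<omega> (e \<circ> case_nat j (skip_index j)) \<noteq> 0"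
proof -
  note orth = orthonormal_complementD(1)[OF c] and perp = orthonormal_complementD(2)[OF c]
  have "\<omega> e \<noteq> 0"
  proof
    assume "\<omega> e = 0"
    then have "e 0 \<in> form_kernel \<omega>"
      using top_rank_form_eq[OF w c] by (simp add: form_kernel_def contr_def)
    then show False using perp[of 0 "e 0"] orth[of 0 0] by simp
  qed
  moreover have "inj_on (case_nat j (skip_index j)) {..<Suc k}"
    "case_nat j (skip_index j) ` {..<Suc k} \<subseteq> {..<Suc k}"
    using j unfolding inj_on_def skip_index_def by (auto split: nat.split if_splits)
  then obtain s where "s \<noteq> 0" "\<omega> (e \<circ> case_nat j (skip_index j)) = s * \<omega> e"
    using kforms_reindex_inj[OF w] by metis
  ultimately show ?thesis by simp
qed

lemma kforms_eq_0_from_faces: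
  assumes D: "D \<in> kforms k" and K: "K \<subseteq> form_kernel D"
    and span: "\<And>x. \<exists>b\<in>span (e ` {..<Suc k}). x - b \<in> K"
    and faces: "\<And>j. j \<le> k \<Longrightarrow> D (e \<circ> skip_index j) = 0"
  shows "D w = 0"
proof (rule kforms_eq_0_from_frame[OF D K span])
  fix f assume f: "\<forall>i<k. f i < Suc k"
  show "D (e \<circ> f) = 0"
  proof (cases "inj_on f {..<k}")
    case False
    then show ?thesis by (rule kforms_reindex_non_inj[OF D])
  next
    case True
    have "\<not> {..<Suc k} \<subseteq> f ` {..<k}"
    proof
      assume "{..<Suc k} \<subseteq> f ` {..<k}"
      then have "card {..<Suc k} \<le> card (f ` {..<k})" by (intro card_mono) auto
      also have "\<dots> \<le> k" using card_image_le[of "{..<k}" f] by simp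
      finally show False by simp
    qed
    then obtain j where "j \<in> {..<Suc k}" "j \<notin> f ` {..<k}" by blast
    then have j: "j \<le> k" "j \<notin> f ` {..<k}" by auto
    define p where "p i = (if f i < j then f i else f i - 1)" for i
    have fj: "f i \<noteq> j" if "i < k" for i using j that by auto
    have skip_p: "skip_index j (p i) = f i" if "i < k" for i
      using fj[OF that] unfolding skip_index_def p_def by auto
    have "inj_on p {..<k}"
    proof (rule inj_onI)
      fix a b assume ab: "a \<in> {..<k}" "b \<in> {..<k}" "p a = p b"
      then have "f a = f b" using skip_p[of a] skip_p[of b] by simp
      then show "a = b" using True ab by (meson inj_onD)
    qed
    moreover have "p ` {..<k} \<subseteq> {..<k}" using f fj j unfolding p_def by auto
    ultimately obtain s where "D ((e \<circ> skip_index j) \<circ> p) = s * D (e \<circ> skip_index j)"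
      using kforms_reindex_inj[OF D] by blast
    moreover have "D (e \<circ> f) = D ((e \<circ> skip_index j) \<circ> p)"
      by (rule kforms_cong[OF D]) (simp add: skip_p)
    ultimately show ?thesis using faces[OF j(1)] by simp
  qed
qed

lemma top_rank_Ann_form_kernel_subset_range:
  assumes w: "\<omega> \<in> kforms (Suc k)" and k: "0 < k"
    and c: "orthonormal_complement (form_kernel \<omega>) e (Suc k)"
  shows "Ann k (form_kernel \<omega>) \<subseteq> range (\<lambda>X. contr X \<omega>)"
proof
  fix \<alpha> assume a: "\<alpha> \<in> Ann k (form_kernel \<omega>)"
  define \<sigma> where "\<sigma> j = \<omega> (e \<circ> case_nat j (skip_index j))" for j
  have \<sigma>: "\<sigma> j \<noteq> 0" if "j \<le> k" for j
    unfolding \<sigma>_def by (rule top_rank_form_frame_nonzero[OF w c that])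
  define X where "X = (\<Sum>j\<le>k. (\<alpha> (e \<circ> skip_index j) / \<sigma> j) *\<^sub>R e j)"
  define D where "D = (\<lambda>v. 1 * \<alpha> v + (- 1) * contr X \<omega> v)"
  have Dk: "D \<in> kforms k"
    unfolding D_def using a by (intro kforms_lincomb contr_in_kforms[OF w]) (simp add: Ann_def)
  have D0: "D v = 0" for v
  proof (rule kforms_eq_0_from_faces[OF Dk _ orthonormal_complementD(3)[OF c]])
    obtain k' where k': "k = Suc k'" using k by (cases k) auto
    show "form_kernel \<omega> \<subseteq> form_kernel D"
    proof
      fix Y assume Y: "Y \<in> form_kernel \<omega>"
      have "contr Y \<alpha> = (\<lambda>v. 0)" "contr Y (contr X \<omega>) = (\<lambda>v. 0)"
        using a contr_in_Ann_form_kernel[of \<omega> k' X] w Y k' by (auto simp: Ann_def)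
      then show "Y \<in> form_kernel D" by (simp add: form_kernel_def D_def contr_def fun_eq_iff)
    qed
  next
    fix j assume j: "j \<le> k"
    have "contr X \<omega> (e \<circ> skip_index j)
        = (\<Sum>l\<le>k. (\<alpha> (e \<circ> skip_index l) / \<sigma> l) * contr (e l) \<omega> (e \<circ> skip_index j))"
      unfolding X_def by (rule contr_sum[OF w]) simp
    also have "\<dots> = (\<Sum>l\<le>k. if l = j then \<alpha> (e \<circ> skip_index j) else 0)"
      by (rule sum.cong) (use contr_frame_skip_index[OF w] j \<sigma> in \<open>auto simp: \<sigma>_def\<close>)
    also have "\<dots> = \<alpha> (e \<circ> skip_index j)" using j by simp
    finally show "D (e \<circ> skip_index j) = 0" unfolding D_def by simp
  qed
  have "\<alpha> v = contr X \<omega> v" for v using D0[of v] by (simp add: D_def)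
  then have "\<alpha> = contr X \<omega>" by (rule ext)
  then show "\<alpha> \<in> range (\<lambda>X. contr X \<omega>)" by blast
qed

lemma wedge1_frame_subsets:
  assumes orth: "\<And>i j. i < m \<Longrightarrow> j < m \<Longrightarrow> e i \<bullet> e j = (if i = j then 1 else 0)"
    and S: "S \<subseteq> {..<m}" "card S = k" and S': "S' \<subseteq> {..<m}" "card S' = k"
  shows "wedge1 k (\<lambda>i x. e (set_enum S i) \<bullet> x) (e \<circ> set_enum S') = (if S = S' then 1 else 0)"
proof -
  have fin: "finite S" "finite S'" using S S' finite_subset by blast+
  note enum = set_enum[OF fin(1) S(2)] and enum' = set_enum[OF fin(2) S'(2)]
  have lt: "set_enum S i < m" "set_enum S' i < m" if "i < k" for i
    using that enum(1) enum'(1) S S' by auto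
  show ?thesis
  proof (cases "S = S'")
    case True
    have "wedge1 k (\<lambda>i x. e (set_enum S i) \<bullet> x) (e \<circ> set_enum S) = 1"
    proof (rule wedge1_dual)
      fix i j assume ij: "i < k" "j < k"
      have "set_enum S i = set_enum S j \<longleftrightarrow> i = j" using enum(2) ij unfolding inj_on_def by auto
      then show "e (set_enum S i) \<bullet> (e \<circ> set_enum S) j = (if i = j then 1 else 0)"
        using orth[OF lt(1)[OF ij(1)] lt(1)[OF ij(2)]] by simp
    qed
    then show ?thesis using True by simp
  next
    case False
    have "\<not> S \<subseteq> S'" using False card_subset_eq[OF fin(2)] S(2) S'(2) by auto
    then obtain x where "x \<in> S" "x \<notin> S'" by blast
    then obtain i where i: "i < k" "set_enum S i \<notin> S'" using enum(1) by (metis imageE lessThan_iff)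
    have "wedge1 k (\<lambda>i x. e (set_enum S i) \<bullet> x) (e \<circ> set_enum S') = 0"
    proof (rule wedge1_eq_0_row[OF i(1)])
      fix j assume j: "j < k"
      have "set_enum S i \<noteq> set_enum S' j" using enum'(1) i j by auto
      then show "e (set_enum S i) \<bullet> (e \<circ> set_enum S') j = 0" using orth[OF lt(1)[OF i(1)] lt(2)[OF j]] by simp
    qed
    then show ?thesis using False by simp
  qed
qed

text \<open>For rank \<open>m \<ge> k + 2\<close> the \<open>m choose k\<close> forms \<open>e\<^sub>S\<^sup>*\<close> with \<open>S \<subseteq> {..<m}\<close>, \<open>|S| = k\<close>, all annihilate
  \<open>ker \<omega>\<close>, but contractions of \<open>\<omega>\<close> only come from the \<open>m\<close>-dimensional span of the frame.\<close>

lemma high_rank_Ann_form_kernel_not_subset_range: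
  assumes w: "\<omega> \<in> kforms (Suc k)" and k: "2 \<le> k" and mk: "k + 2 \<le> m"
    and c: "orthonormal_complement (form_kernel \<omega>) e m"
  shows "\<not> Ann k (form_kernel \<omega>) \<subseteq> range (\<lambda>X. contr X \<omega>)"
proof
  assume surj: "Ann k (form_kernel \<omega>) \<subseteq> range (\<lambda>X. contr X \<omega>)"
  note orth = orthonormal_complementD(1)[OF c] and perp = orthonormal_complementD(2)[OF c]
    and span = orthonormal_complementD(3)[OF c]
  define I where "I = {S. S \<subseteq> {..<m} \<and> card S = k}"
  have fI: "finite I" unfolding I_def by (rule finite_subset[of _ "Pow {..<m}"]) auto
  define \<beta> where "\<beta> S = wedge1 k (\<lambda>i x. e (set_enum S i) \<bullet> x)" for S
  have \<beta>_Ann: "\<beta> S \<in> Ann k (form_kernel \<omega>)" if S: "S \<in> I" for S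
  proof -
    have "set_enum S i < m" if "i < k" for i
      using set_enum(1)[of S k] S that finite_subset[of S "{..<m}"] unfolding I_def by auto
    then show ?thesis unfolding \<beta>_def using k perp by (intro wedge1_inner_in_Ann) auto
  qed
  have "\<exists>b. b \<in> span (e ` {..<m}) \<and> contr b \<omega> = \<beta> S" if S: "S \<in> I" for S
  proof -
    obtain X where X: "\<beta> S = contr X \<omega>" using surj \<beta>_Ann[OF S] by blast
    obtain b where b: "b \<in> span (e ` {..<m})" "X - b \<in> form_kernel \<omega>" using span by blast
    then have "contr b \<omega> = contr X \<omega>"
      using contr_diff[OF w, of X b] by (auto simp: form_kernel_def fun_eq_iff)
    then show ?thesis using b X by auto
  qed
  then obtain Z where Z: "\<And>S. S \<in> I \<Longrightarrow> Z S \<in> span (e ` {..<m}) \<and> contr (Z S) \<omega> = \<beta> S" by metis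
  have "dim (span (e ` {..<m})) < card I"
    using dim_span_image_le[of e m] less_binomial[OF k mk] n_subsets[of "{..<m}" k] unfolding I_def by simp
  then obtain c where c: "\<exists>S\<in>I. c S \<noteq> 0" "(\<Sum>S\<in>I. c S *\<^sub>R Z S) = 0"
    using exists_nontrivial_relation[OF fI _ subspace_span, of Z "e ` {..<m}"] Z by blast
  have "c S' = 0" if S': "S' \<in> I" for S'
  proof -
    have "0 = contr (\<Sum>S\<in>I. c S *\<^sub>R Z S) \<omega> (e \<circ> set_enum S')" using c(2) contr_zero[OF w] by simp
    also have "\<dots> = (\<Sum>S\<in>I. c S * \<beta> S (e \<circ> set_enum S'))"
      using contr_sum[OF w fI] Z by simp
    also have "\<dots> = (\<Sum>S\<in>I. if S = S' then c S' else 0)"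
      using wedge1_frame_subsets[OF orth] S' unfolding \<beta>_def I_def by (intro sum.cong) auto
    also have "\<dots> = c S'" using S' fI by simp
    finally show ?thesis by simp
  qed
  then show False using c(1) by blast
qed

lemma decomposable_rank_bound:
  fixes \<omega> :: "(nat \<Rightarrow> 'v::euclidean_space) \<Rightarrow> real"
  assumes "decomposable (Suc k) \<omega>"
  shows "DIM('v) \<le> Suc k + dim (form_kernel \<omega>)"
proof -
  obtain \<theta> where \<theta>: "\<And>i. i < Suc k \<Longrightarrow> linear (\<theta> i)" and w: "\<omega> = wedge1 (Suc k) \<theta>"
    using assms unfolding decomposable_def by blast
  have "\<forall>i. \<exists>a. i < Suc k \<longrightarrow> (\<forall>x. \<theta> i x = a \<bullet> x)"
    using linear_functional_eq_inner \<theta> by blast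
  then obtain a where a: "\<And>i x. i < Suc k \<Longrightarrow> \<theta> i x = a i \<bullet> x" by metis
  define A where "A = span (a ` {..<Suc k})"
  define A' where "A' = {y. \<forall>x\<in>A. orthogonal x y}"
  have "dim A' + dim A = DIM('v)"
    using dim_subspace_orthogonal_to_vectors[OF subspace_span subspace_UNIV]
    unfolding A'_def A_def by simp
  moreover have "dim A \<le> Suc k" unfolding A_def by (rule dim_span_image_le)
  moreover have "A' \<subseteq> form_kernel \<omega>"
  proof
    fix y assume y: "y \<in> A'"
    have "contr y \<omega> v = 0" for v unfolding w contr_def
    proof (rule wedge1_eq_0_column[of 0])
      fix i assume i: "i < Suc k"
      have "a i \<in> A" unfolding A_def using i by (auto intro: span_base)
      then show "\<theta> i (case_nat y v 0) = 0" using y a[OF i] unfolding A'_def orthogonal_def by simp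
    qed simp
    then show "y \<in> form_kernel \<omega>" by (auto simp: form_kernel_def)
  qed
  then have "dim A' \<le> dim (form_kernel \<omega>)" by (rule dim_subset)
  ultimately show ?thesis by linarith
qed

lemma decomposable_iff_Ann_form_kernel_subset_range:
  fixes \<omega> :: "(nat \<Rightarrow> 'v::euclidean_space) \<Rightarrow> real"
  assumes w: "\<omega> \<in> kforms (Suc k)" and k: "2 \<le> k"
  shows "decomposable (Suc k) \<omega> \<longleftrightarrow> Ann k (form_kernel \<omega>) \<subseteq> range (\<lambda>X. contr X \<omega>)"
proof -
  obtain e m where m: "m + dim (form_kernel \<omega>) = DIM('v)"
    and c: "orthonormal_complement (form_kernel \<omega>) e m"
    using obtain_orthonormal_complement[OF subspace_form_kernel[OF w]] by blast
  consider "m \<le> k" | "m = Suc k" | "k + 2 \<le> m" by linarith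
  then show ?thesis
  proof cases
    case 1
    then have \<omega>0: "\<omega> = (\<lambda>v. 0)" by (rule form_eq_0_low_rank[OF w c])
    then have "form_kernel \<omega> = UNIV" by (simp add: form_kernel_def contr_def)
    then have "Ann k (form_kernel \<omega>) \<subseteq> {\<lambda>v. 0}" using Ann_UNIV[of k] k by auto
    moreover have "(\<lambda>v. 0) \<in> range (\<lambda>X. contr X \<omega>)" using \<omega>0 by (simp add: contr_def)
    ultimately show ?thesis using \<omega>0 decomposable_zero by auto
  next
    case 2
    then show ?thesis
      using top_rank_decomposable[OF w] top_rank_Ann_form_kernel_subset_range[OF w] c k by auto
  next
    case 3
    then have "\<not> decomposable (Suc k) \<omega>" using decomposable_rank_bound m by fastforce
    then show ?thesis using high_rank_Ann_form_kernel_not_subset_range[OF w k 3 c] by blast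
  qed
qed

section \<open>Isotropic subspaces\<close>

lemma is_subspace_kforms: "is_subspace k L \<Longrightarrow> (X, \<alpha>) \<in> L \<Longrightarrow> \<alpha> \<in> kforms k"
  unfolding is_subspace_def by blast

lemma is_subspace_zero: "is_subspace k L \<Longrightarrow> (0, \<lambda>v. 0) \<in> L"
  unfolding is_subspace_def by blast

lemma is_subspace_add:
  "is_subspace k L \<Longrightarrow> (X, \<alpha>) \<in> L \<Longrightarrow> (Y, \<beta>) \<in> L \<Longrightarrow> (X + Y, \<lambda>v. \<alpha> v + \<beta> v) \<in> L"
  unfolding is_subspace_def by blast

lemma is_subspace_scale: "is_subspace k L \<Longrightarrow> (X, \<alpha>) \<in> L \<Longrightarrow> (c *\<^sub>R X, \<lambda>v. c * \<alpha> v) \<in> L"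
  unfolding is_subspace_def by blast

lemma is_subspace_diff:
  assumes "is_subspace k L" "(X, \<alpha>) \<in> L" "(Y, \<beta>) \<in> L"
  shows "(X - Y, \<lambda>v. \<alpha> v - \<beta> v) \<in> L"
  using is_subspace_add[OF assms(1,2) is_subspace_scale[OF assms(1,3), of "-1"]] by simp

lemma subspace_fst_image:
  assumes L: "is_subspace k L"
  shows "subspace (fst ` L)"
  unfolding subspace_def
proof (intro conjI ballI allI)
  show "0 \<in> fst ` L" using is_subspace_zero[OF L] by force
next
  fix x y assume "x \<in> fst ` L" "y \<in> fst ` L"
  then obtain a b where "(x, a) \<in> L" "(y, b) \<in> L" by force
  from is_subspace_add[OF L this] show "x + y \<in> fst ` L" by force
next
  fix c x assume "x \<in> fst ` L"
  then obtain a where "(x, a) \<in> L" by force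
  from is_subspace_scale[OF L this, of c] show "c *\<^sub>R x \<in> fst ` L" by force
qed

lemma isotropic_pairing:
  assumes "isotropic k L" "(X, \<alpha>) \<in> L" "(Y, \<beta>) \<in> L"
  shows "contr X \<beta> v + contr Y \<alpha> v = 0"
proof -
  have "(Y, \<beta>) \<in> orth k L" using assms unfolding isotropic_def by blast
  then have "pairing (X, \<alpha>) (Y, \<beta>) = (\<lambda>v. 0)" using assms(2) unfolding orth_def by blast
  then show ?thesis unfolding pairing_def by (simp add: fun_eq_iff)
qed

lemma uncurried_form_in_kforms:
  fixes \<phi> :: "'v::euclidean_space \<Rightarrow> (nat \<Rightarrow> 'v) \<Rightarrow> real"
  assumes \<phi>: "\<And>X. \<phi> X \<in> kforms k" and lin: "\<And>v. linear (\<lambda>X. \<phi> X v)"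
    and self: "\<And>X. X \<in> form_kernel (\<phi> X)"
  shows "(\<lambda>v. \<phi> (v 0) (\<lambda>i. v (Suc i))) \<in> kforms (Suc k)"
  unfolding kforms_def
proof (intro CollectI conjI allI impI)
  fix v w :: "nat \<Rightarrow> 'v" assume h: "\<forall>i<Suc k. v i = w i"
  then have "\<phi> (v 0) (\<lambda>i. v (Suc i)) = \<phi> (v 0) (\<lambda>i. w (Suc i))" by (intro kforms_cong[OF \<phi>]) simp
  then show "\<phi> (v 0) (\<lambda>i. v (Suc i)) = \<phi> (w 0) (\<lambda>i. w (Suc i))" using h by simp
next
  fix i and v :: "nat \<Rightarrow> 'v" assume i: "i < Suc k"
  show "linear (\<lambda>x. \<phi> ((v(i := x)) 0) (\<lambda>l. (v(i := x)) (Suc l)))"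
  proof (cases i)
    case 0
    then show ?thesis using lin by simp
  next
    case (Suc i')
    then have "(\<lambda>l. (v(i := x)) (Suc l)) = (\<lambda>l. v (Suc l))(i' := x)" for x by (auto simp: fun_eq_iff)
    then show ?thesis using kforms_linear[OF \<phi>, of i'] i Suc by simp
  qed
next
  fix v :: "nat \<Rightarrow> 'v" and i j assume h: "i < Suc k \<and> j < Suc k \<and> i \<noteq> j \<and> v i = v j"
  have first_repeated: "\<phi> (v 0) (\<lambda>i. v (Suc i)) = 0" if "j' < k" "v (Suc j') = v 0" for j'
    by (rule kforms_eq_0_if_entry_in_kernel[OF \<phi> self that(1)]) (use that in simp)
  show "\<phi> (v 0) (\<lambda>i. v (Suc i)) = 0"
  proof (cases i; cases j)
    fix i' j' assume "i = Suc i'" "j = Suc j'"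
    then show ?thesis using h by (intro kforms_eq_0_repeated[OF \<phi>, of i' j']) simp_all
  qed (use h first_repeated in auto)
qed

lemma fst_image_UNIV_unique:
  fixes L :: "('v::euclidean_space \<times> ((nat \<Rightarrow> 'v) \<Rightarrow> real)) set"
  assumes L: "is_subspace k L" and iso: "isotropic k L" and full: "fst ` L = UNIV" and k: "0 < k"
    and X: "(X, \<alpha>) \<in> L" "(X, \<beta>) \<in> L"
  shows "\<alpha> = \<beta>"
proof -
  obtain k' where k': "k = Suc k'" using k by (cases k) auto
  have \<gamma>: "(0, \<lambda>v. \<alpha> v - \<beta> v) \<in> L" using is_subspace_diff[OF L X] by simp
  have "(\<lambda>v. \<alpha> v - \<beta> v) \<in> Ann k UNIV"
    unfolding Ann_def
  proof (intro CollectI conjI ballI)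
    show "(\<lambda>v. \<alpha> v - \<beta> v) \<in> kforms k" by (rule is_subspace_kforms[OF L \<gamma>])
    fix Y :: 'v
    have "Y \<in> fst ` L" using full by simp
    then obtain \<eta> where \<eta>: "(Y, \<eta>) \<in> L" by force
    have "contr 0 \<eta> v = 0" for v using contr_zero is_subspace_kforms[OF L \<eta>] k' by blast
    then show "contr Y (\<lambda>v. \<alpha> v - \<beta> v) = (\<lambda>v. 0)"
      using isotropic_pairing[OF iso \<eta> \<gamma>] by (simp add: fun_eq_iff)
  qed
  then have "(\<lambda>v. \<alpha> v - \<beta> v) = (\<lambda>v. 0)" by (rule Ann_UNIV[OF k])
  then show ?thesis by (simp add: fun_eq_iff)
qed

lemma graph_if_fst_image_UNIV:
  fixes L :: "('v::euclidean_space \<times> ((nat \<Rightarrow> 'v) \<Rightarrow> real)) set"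
  assumes L: "is_subspace k L" and iso: "isotropic k L" and full: "fst ` L = UNIV" and k: "0 < k"
  obtains \<omega> where "\<omega> \<in> kforms (Suc k)" "L = form_graph \<omega>"
proof -
  have ex: "\<exists>\<alpha>. (X, \<alpha>) \<in> L" for X
  proof -
    have "X \<in> fst ` L" using full by simp
    then show ?thesis by force
  qed
  define \<phi> where "\<phi> X = (SOME \<alpha>. (X, \<alpha>) \<in> L)" for X
  have \<phi>L: "(X, \<phi> X) \<in> L" for X unfolding \<phi>_def using ex[of X] by (rule someI_ex)
  have \<phi>_eq: "\<alpha> = \<phi> X" if "(X, \<alpha>) \<in> L" for X \<alpha> using fst_image_UNIV_unique[OF L iso full k that \<phi>L] .
  have "linear (\<lambda>X. \<phi> X v)" for v
  proof (rule linearI)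
    show "\<phi> (X + Y) v = \<phi> X v + \<phi> Y v" for X Y
      using fun_cong[OF \<phi>_eq[OF is_subspace_add[OF L \<phi>L[of X] \<phi>L[of Y]]], where x = v] by simp
    show "\<phi> (c *\<^sub>R X) v = c *\<^sub>R \<phi> X v" for c X
      using fun_cong[OF \<phi>_eq[OF is_subspace_scale[OF L \<phi>L[of X]]], where x = v] by simp
  qed
  moreover have "X \<in> form_kernel (\<phi> X)" for X
    using isotropic_pairing[OF iso \<phi>L \<phi>L, of X X] by (simp add: form_kernel_def fun_eq_iff)
  ultimately have \<omega>: "(\<lambda>v. \<phi> (v 0) (\<lambda>i. v (Suc i))) \<in> kforms (Suc k)"
    using uncurried_form_in_kforms is_subspace_kforms[OF L \<phi>L] by blast
  have "contr X (\<lambda>v. \<phi> (v 0) (\<lambda>i. v (Suc i))) = \<phi> X" for X by (simp add: contr_def)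
  then have "L = form_graph (\<lambda>v. \<phi> (v 0) (\<lambda>i. v (Suc i)))"
    unfolding form_graph_def using \<phi>L \<phi>_eq by auto
  with \<omega> show ?thesis by (rule that)
qed

lemma C2s_form_graph_iff:
  assumes w: "\<omega> \<in> kforms (Suc k)" and k: "2 \<le> k"
  shows "C2s k (form_graph \<omega>) \<longleftrightarrow> isotropic k (form_graph \<omega>) \<and> decomposable (Suc k) \<omega>"
proof -
  obtain k' where k': "k = Suc k'" using k by (cases k) auto
  have "capV (form_graph \<omega>) = form_kernel \<omega>"
    unfolding capV_def form_graph_def form_kernel_def by auto
  moreover have "snd ` form_graph \<omega> = range (\<lambda>X. contr X \<omega>)"
    unfolding form_graph_def by force
  moreover have "range (\<lambda>X. contr X \<omega>) \<subseteq> Ann k (form_kernel \<omega>)"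
    using contr_in_Ann_form_kernel[of \<omega> k'] w k' by blast
  ultimately have "Ann k (capV (form_graph \<omega>)) = snd ` form_graph \<omega> \<longleftrightarrow> decomposable (Suc k) \<omega>"
    using decomposable_iff_Ann_form_kernel_subset_range[OF w k] by (metis subset_antisym)
  then show ?thesis unfolding C2s_def by blast
qed

lemma standard_dim_fst_image:
  fixes L :: "('v::euclidean_space \<times> ((nat \<Rightarrow> 'v) \<Rightarrow> real)) set"
  assumes L: "is_subspace k L" and std: "standard k L" and proper: "fst ` L \<noteq> UNIV"
  shows "dim (fst ` L) + k \<le> DIM('v)"
proof (rule ccontr)
  assume big: "\<not> ?thesis"
  obtain e m where m: "m + dim (fst ` L) = DIM('v)" and c: "orthonormal_complement (fst ` L) e m"
    using obtain_orthonormal_complement[OF subspace_fst_image[OF L]] by blast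
  have zero: "\<eta> = (\<lambda>v. 0)" if "\<eta> \<in> Ann k (fst ` L)" for \<eta>
  proof
    fix w show "\<eta> w = 0"
      by (rule kforms_eq_0_low_rank[OF _ _ orthonormal_complementD(3)[OF c]])
        (use that m big in \<open>auto simp: Ann_def form_kernel_def\<close>)
  qed
  have "contr x \<eta> = (\<lambda>v. 0)" if "\<eta> \<in> Ann k (fst ` L)" for x \<eta>
    using zero[OF that] contr_zero_form by simp
  then have "annV (Ann k (fst ` L)) = UNIV" unfolding annV_def by blast
  then show False using std proper by (simp add: standard_def)
qed

lemma exists_dual_vector:
  fixes K :: "'v::euclidean_space set"
  assumes K: "subspace K" and X0: "X0 \<notin> K"
  obtains z where "z \<in> span (insert X0 K)" "z \<bullet> X0 = 1" "\<And>Y. Y \<in> K \<Longrightarrow> z \<bullet> Y = 0"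
proof -
  obtain y where y: "\<And>Y. Y \<in> K \<Longrightarrow> y \<bullet> Y = 0" "X0 - y \<in> K"
    using exists_orthogonal_part[OF K subspace_UNIV] by blast
  have "y \<noteq> 0" using y(2) X0 by auto
  have "y \<bullet> X0 = y \<bullet> (X0 - y) + y \<bullet> y" by (simp add: inner_diff_right)
  then have yX0: "y \<bullet> X0 = y \<bullet> y" using y by simp
  have "y = X0 - (X0 - y)" by simp
  then have "y \<in> span (insert X0 K)"
    using y(2) by (metis insertI1 span_base span_diff span_mono subset_insertI subsetD)
  then show ?thesis
    using y(1) yX0 \<open>y \<noteq> 0\<close> by (intro that[of "y /\<^sub>R (y \<bullet> y)"]) (simp_all add: span_scale)
qed

text \<open>The forms \<open>\<beta>\<^sub>j = z\<^sup>\<flat> \<and> w\<^sub>j\<^sup>\<flat> \<and> w\<^sub>d\<^sub>+\<^sub>1\<^sup>\<flat> \<and> \<dots> \<and> w\<^sub>d\<^sub>+\<^sub>k\<^sub>-\<^sub>2\<^sup>\<flat>\<close>, with \<open>z\<close> dual to \<open>X\<^sub>0\<close> and \<open>w\<close>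
  orthonormal to \<open>K + \<real>X\<^sub>0\<close>, and the arguments \<open>V\<^sub>j = (X\<^sub>0, w\<^sub>j, w\<^sub>d\<^sub>+\<^sub>1, \<dots>, w\<^sub>d\<^sub>+\<^sub>k\<^sub>-\<^sub>2)\<close>.\<close>

lemma exists_Ann_dual_family:
  fixes K :: "'v::euclidean_space set"
  assumes k: "2 \<le> k" and K: "subspace K" and X0: "X0 \<notin> K" and dim: "dim K + d + k \<le> DIM('v)"
  obtains \<beta> V where "\<And>j. j \<le> d \<Longrightarrow> \<beta> j \<in> Ann k K" "\<And>j. j \<le> d \<Longrightarrow> V j 0 = X0"
    "\<And>j j'. j \<le> d \<Longrightarrow> j' \<le> d \<Longrightarrow> \<beta> j (V j') = (if j = j' then 1 else 0)"
proof -
  obtain z where z: "z \<in> span (insert X0 K)" "z \<bullet> X0 = 1" "\<And>Y. Y \<in> K \<Longrightarrow> z \<bullet> Y = 0"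
    using exists_dual_vector[OF K X0] by blast
  have "X0 \<notin> span K" using K X0 by (metis span_eq_iff)
  then have "dim (span (insert X0 K)) = dim K + 1" using dim_insert[of X0 K] by simp
  moreover obtain w M where M: "M + dim (span (insert X0 K)) = DIM('v)"
    and c: "orthonormal_complement (span (insert X0 K)) w M"
    using obtain_orthonormal_complement[of "span (insert X0 K)"] by blast
  ultimately have M: "d + k \<le> M + 1" using dim by simp
  note orth = orthonormal_complementD(1)[OF c] and perp = orthonormal_complementD(2)[OF c]
  have wX0: "w i \<bullet> X0 = 0" and wK: "\<And>Y. Y \<in> K \<Longrightarrow> w i \<bullet> Y = 0" and wz: "w i \<bullet> z = 0"
    if "i < M" for i
    using perp[OF that] z(1) by (auto intro: span_base)
  define \<iota> where "\<iota> j i = (if i = 1 then j else d + i - 1)" for j i :: nat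
  define a where "a j i = (if i = 0 then z else w (\<iota> j i))" for j i
  define V where "V j = case_nat X0 (\<lambda>i. w (\<iota> j (Suc i)))" for j
  have \<iota>M: "\<iota> j i < M" if "j \<le> d" "1 \<le> i" "i < k" for j i
    using that M unfolding \<iota>_def by auto
  have entry: "a j i \<bullet> V j' l = (if i = 0 \<and> l = 0 then 1 else if i = 0 \<or> l = 0 then 0
      else if \<iota> j i = \<iota> j' l then 1 else 0)" if "j \<le> d" "j' \<le> d" "i < k" "l < k" for j j' i l
    using that z(2) wX0 wz orth \<iota>M[of j i] \<iota>M[of j' l]
    unfolding a_def V_def by (cases l) (auto simp: inner_commute)
  show ?thesis
  proof (rule that[of "\<lambda>j. wedge1 k (\<lambda>i x. a j i \<bullet> x)" V])
    fix j assume j: "j \<le> d"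
    show "wedge1 k (\<lambda>i x. a j i \<bullet> x) \<in> Ann k K"
      using k z(3) wK \<iota>M[OF j] unfolding a_def by (intro wedge1_inner_in_Ann) auto
    show "V j 0 = X0" by (simp add: V_def)
  next
    fix j j' assume jj: "j \<le> d" "j' \<le> d"
    show "wedge1 k (\<lambda>i x. a j i \<bullet> x) (V j') = (if j = j' then 1 else 0)"
    proof (cases "j = j'")
      case True
      have "\<iota> j i = \<iota> j l \<longleftrightarrow> i = l" if "i \<noteq> 0" "l \<noteq> 0" for i l
        using jj that unfolding \<iota>_def by auto
      then have "wedge1 k (\<lambda>i x. a j i \<bullet> x) (V j) = 1"
        using entry[OF jj(1) jj(1)] by (intro wedge1_dual) auto
      then show ?thesis using True by simp
    next
      case False
      have "\<iota> j 1 \<noteq> \<iota> j' l" if "l \<noteq> 0" for l using False jj that unfolding \<iota>_def by auto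
      then have "wedge1 k (\<lambda>i x. a j i \<bullet> x) (V j') = 0"
        using k entry[OF jj, of 1] by (intro wedge1_eq_0_row[of 1]) auto
      then show ?thesis using False by simp
    qed
  qed
qed

text \<open>The partners \<open>Y\<^sub>j\<close> of the \<open>d + 1\<close> forms \<open>\<beta>\<^sub>j\<close> above would be linearly independent modulo \<open>K\<close>,
  which is impossible inside \<open>E\<close> since \<open>d = dim E - dim K\<close>.\<close>

lemma exists_Ann_form_without_partner:
  fixes K E :: "'v::euclidean_space set"
  assumes k: "2 \<le> k" and dimE: "dim E + k \<le> DIM('v)" and K: "subspace K" and E: "subspace E"
    and KE: "K \<subseteq> E" and X0: "X0 \<in> E" "X0 \<notin> K" and \<alpha>0: "\<alpha>0 \<in> Ann k K"
  shows "\<exists>\<beta>\<in>Ann k K. \<forall>Y\<in>E. \<exists>v. contr X0 \<beta> v + contr Y \<alpha>0 v \<noteq> 0"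
proof (rule ccontr)
  assume "\<not> ?thesis"
  then have partner: "\<exists>Y\<in>E. \<forall>v. contr X0 \<beta> v + contr Y \<alpha>0 v = 0" if "\<beta> \<in> Ann k K" for \<beta>
    using that by blast
  obtain k' where k': "k = Suc k'" using k by (cases k) auto
  have \<alpha>0k: "\<alpha>0 \<in> kforms (Suc k')" and \<alpha>0K: "\<And>Y. Y \<in> K \<Longrightarrow> contr Y \<alpha>0 = (\<lambda>v. 0)"
    using \<alpha>0 k' by (auto simp: Ann_def)
  define P where "P = {x \<in> E. \<forall>Y\<in>K. orthogonal Y x}"
  have P: "subspace P" unfolding P_def
    using subspace_inter[OF E subspace_orthogonal_to_vectors[of K]] by (simp add: Int_def)
  have dP: "dim P + dim K = dim E"
    unfolding P_def by (rule dim_subspace_orthogonal_to_vectors[OF K E KE])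
  obtain \<beta> V where \<beta>: "\<And>j. j \<le> dim P \<Longrightarrow> \<beta> j \<in> Ann k K" and V: "\<And>j. j \<le> dim P \<Longrightarrow> V j 0 = X0"
    and dual: "\<And>j j'. j \<le> dim P \<Longrightarrow> j' \<le> dim P \<Longrightarrow> \<beta> j (V j') = (if j = j' then 1 else 0)"
    using exists_Ann_dual_family[OF k K X0(2), of "dim P"] dimE dP by auto
  have "\<forall>j. \<exists>Y. j \<le> dim P \<longrightarrow> Y \<in> E \<and> (\<forall>v. contr X0 (\<beta> j) v + contr Y \<alpha>0 v = 0)"
    using partner \<beta> by blast
  then obtain Y where Y: "\<And>j. j \<le> dim P \<Longrightarrow> Y j \<in> E"
    and Y0: "\<And>j v. j \<le> dim P \<Longrightarrow> contr X0 (\<beta> j) v + contr (Y j) \<alpha>0 v = 0"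
    by metis
  have "\<forall>j. j \<le> dim P \<longrightarrow> (\<exists>Z. Z \<in> P \<and> Y j - Z \<in> K)"
  proof (intro allI impI)
    fix j assume "j \<le> dim P"
    then obtain z where "z \<in> E" "\<And>Y. Y \<in> K \<Longrightarrow> z \<bullet> Y = 0" "Y j - z \<in> K"
      using exists_orthogonal_part[OF K E KE Y] by blast
    then show "\<exists>Z. Z \<in> P \<and> Y j - Z \<in> K" unfolding P_def orthogonal_def by (auto simp: inner_commute)
  qed
  then obtain Z where Z: "\<And>j. j \<le> dim P \<Longrightarrow> Z j \<in> P" "\<And>j. j \<le> dim P \<Longrightarrow> Y j - Z j \<in> K"
    by metis
  obtain c where c: "\<exists>j\<in>{..dim P}. c j \<noteq> 0" "(\<Sum>j\<le>dim P. c j *\<^sub>R Z j) = 0"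
    by (rule exists_nontrivial_relation[of "{..dim P}" Z P]) (use Z(1) P in auto)
  have "(\<Sum>j\<le>dim P. c j *\<^sub>R (Y j - Z j)) \<in> K"
    using Z(2) K by (intro subspace_sum subspace_scale) auto
  then have YK: "(\<Sum>j\<le>dim P. c j *\<^sub>R Y j) \<in> K"
    using c(2) by (simp add: scaleR_diff_right sum_subtractf)
  have "c j' = 0" if j': "j' \<le> dim P" for j'
  proof -
    define u where "u = (\<lambda>i. V j' (Suc i))"
    have "case_nat X0 u = V j'" using V[OF j'] unfolding u_def by (auto simp: fun_eq_iff split: nat.split)
    then have Yu: "contr (Y j) \<alpha>0 u = - \<beta> j (V j')" if "j \<le> dim P" for j
      using Y0[OF that, of u] by (simp add: contr_def)
    have "0 = contr (\<Sum>j\<le>dim P. c j *\<^sub>R Y j) \<alpha>0 u" using \<alpha>0K[OF YK] by simp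
    also have "\<dots> = (\<Sum>j\<le>dim P. c j * contr (Y j) \<alpha>0 u)" by (rule contr_sum[OF \<alpha>0k]) simp
    also have "\<dots> = (\<Sum>j\<le>dim P. if j = j' then - c j' else 0)"
      using Yu dual j' by (intro sum.cong) auto
    also have "\<dots> = - c j'" using j' by simp
    finally show ?thesis by simp
  qed
  then show False using c(1) by auto
qed

lemma capV_eq_fst_image_if_C2s:
  fixes L :: "('v::euclidean_space \<times> ((nat \<Rightarrow> 'v) \<Rightarrow> real)) set"
  assumes L: "is_subspace k L" and C: "C2s k L" and k: "2 \<le> k"
    and dim: "dim (fst ` L) + k \<le> DIM('v)"
  shows "capV L = fst ` L"
proof (rule ccontr)
  have KE: "capV L \<subseteq> fst ` L" unfolding capV_def by force
  have K: "subspace (capV L)"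
    using is_subspace_zero[OF L] is_subspace_add[OF L] is_subspace_scale[OF L]
    unfolding subspace_def capV_def by fastforce
  have iso: "isotropic k L" and Ann: "Ann k (capV L) = snd ` L" using C by (auto simp: C2s_def)
  assume "capV L \<noteq> fst ` L"
  then obtain X0 \<alpha>0 where X0: "(X0, \<alpha>0) \<in> L" "X0 \<notin> capV L" using KE by force
  have "\<alpha>0 \<in> Ann k (capV L)" using Ann X0(1) by force
  then obtain \<beta> where "\<beta> \<in> Ann k (capV L)" and no_partner: "\<forall>Y\<in>fst ` L. \<exists>v. contr X0 \<beta> v + contr Y \<alpha>0 v \<noteq> 0"
    using exists_Ann_form_without_partner[OF k dim K subspace_fst_image[OF L] KE _ X0(2)] X0(1) by force
  then obtain Y where "(Y, \<beta>) \<in> L" using Ann by force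
  then show False using no_partner isotropic_pairing[OF iso X0(1)] by force
qed

lemma eq_Sigma_Ann_if_C2s:
  assumes L: "is_subspace k L" and C: "C2s k L" and eq: "capV L = fst ` L"
  shows "L = fst ` L \<times> Ann k (fst ` L)"
proof -
  have Ann: "Ann k (fst ` L) = snd ` L" using C eq by (simp add: C2s_def)
  have "(X, \<alpha>) \<in> L" if X: "X \<in> fst ` L" and \<alpha>: "\<alpha> \<in> snd ` L" for X \<alpha>
  proof -
    obtain Y where Y: "(Y, \<alpha>) \<in> L" using \<alpha> by force
    have "(X, \<lambda>v. 0) \<in> L" "(Y, \<lambda>v. 0) \<in> L" using X Y eq unfolding capV_def by force+
    then have "(0, \<alpha>) \<in> L" using is_subspace_diff[OF L Y] by force
    from is_subspace_add[OF L \<open>(X, \<lambda>v. 0) \<in> L\<close> this] show ?thesis by simp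
  qed
  then show ?thesis unfolding Ann by force
qed

lemma C2s_Sigma_Ann_iff:
  assumes "subspace E"
  shows "C2s k (E \<times> Ann k E) \<longleftrightarrow> isotropic k (E \<times> Ann k E)"
proof -
  have "(\<lambda>v. 0) \<in> Ann k E" unfolding Ann_def using kforms_zero contr_zero_form by auto
  then have "capV (E \<times> Ann k E) = E" unfolding capV_def by auto
  moreover have "snd ` (E \<times> Ann k E) = Ann k E" using subspace_0[OF assms] by force
  ultimately show ?thesis unfolding C2s_def by simp
qed

theorem propositionA4:
  fixes k :: nat and L :: "('v::euclidean_space \<times> ((nat \<Rightarrow> 'v) \<Rightarrow> real)) set"
  assumes "2 \<le> k" and "k \<le> DIM('v) - 1"
    and "is_subspace k L" and "standard k L"
  shows "C2s k L \<longleftrightarrow>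
    ((\<exists>\<omega>\<in>kforms (Suc k). decomposable (Suc k) \<omega> \<and> L = {(X, contr X \<omega>) | X. True}) \<or>
     (\<exists>E. subspace E \<and> dim E \<le> DIM('v) - k \<and> L = {(X, \<alpha>) | X \<alpha>. X \<in> E \<and> \<alpha> \<in> Ann k E}))"
proof -
  have iso: "isotropic k L" using assms(4) by (simp add: standard_def)
  have Sigma: "{(X, \<alpha>) | X \<alpha>. X \<in> E \<and> \<alpha> \<in> Ann k E} = E \<times> Ann k E" for E by auto
  show ?thesis (is "_ \<longleftrightarrow> ?graph \<or> ?product")
  proof
    assume C: "C2s k L"
    show "?graph \<or> ?product"
    proof (cases "fst ` L = UNIV")
      case True
      then obtain \<omega> where \<omega>: "\<omega> \<in> kforms (Suc k)" "L = form_graph \<omega>"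
        using graph_if_fst_image_UNIV[OF assms(3) iso] assms(1) by auto
      then have "decomposable (Suc k) \<omega>" using C C2s_form_graph_iff[OF _ assms(1)] by blast
      then show ?thesis using \<omega> unfolding form_graph_def by blast
    next
      case False
      then have dim: "dim (fst ` L) + k \<le> DIM('v)" by (rule standard_dim_fst_image[OF assms(3,4)])
      then have "L = fst ` L \<times> Ann k (fst ` L)"
        using eq_Sigma_Ann_if_C2s[OF assms(3) C] capV_eq_fst_image_if_C2s[OF assms(3) C assms(1)] by blast
      then show ?thesis
        using subspace_fst_image[OF assms(3)] dim Sigma by (intro disjI2 exI[of _ "fst ` L"]) auto
    qed
  next
    assume "?graph \<or> ?product"
    then show "C2s k L"
      using C2s_form_graph_iff[OF _ assms(1)] C2s_Sigma_Ann_iff iso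
      unfolding Sigma form_graph_def[symmetric] by auto
  qed
qed

end
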